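(* Let $n\ge p$, $\Psi\in\mathbb R^{n\times p}$ with $\|\Psi\|_2<1$, and set $\epsilon_0=\tfrac12(1-\|\Psi\|_2)$. There is a constant $K_{n,p,\epsilon_0}>0$ depending only on $n,p,\epsilon_0$ such that for every $p\times p$ diagonal matrix $D$ with positive diagonal entries, every $M\in\mathcal V_{n,p}$ and every $V\in\mathcal V_{p,p}$, $$\frac{\mathrm{etr}(VDM^T\Psi)}{{}_0F_1\!\left(\tfrac n2,\tfrac{D^2}{4}\right)}<\frac{\mathrm{etr}(-\epsilon_0 D)}{K_{n,p,\epsilon_0}}.$$
   Context: $\mathcal V_{n,p}=\{X\in\mathbb R^{n\times p}:X^TX=I_p\}$ (so $\mathcal V_{p,p}=O(p)$), with normalized Haar probability measure $[dX]$. $\|\cdot\|_2$ is the spectral norm, $\mathrm{etr}(A)=\exp(\mathrm{tr}A)$. For diagonal $D$ with diagonal $\boldsymbol d$, ${}_0F_1\!\left(\tfrac n2,\tfrac{D^2}{4}\right)=\int_{\mathcal V_{n,p}}\exp\big(\sum_j d_jX_{jj}\big)[dX]$. *)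

theory Defs
  imports "HOL-Probability.Probability"
begin

text \<open>Real matrices are represented as functions nat => nat => real; an m x k matrix
  is only ever read at indices i < m, j < k (dimensions are carried explicitly).\<close>

type_synonym rmat = "nat \<Rightarrow> nat \<Rightarrow> real"

definition mmult :: "nat \<Rightarrow> rmat \<Rightarrow> rmat \<Rightarrow> rmat" where
  "mmult k A B = (\<lambda>i j. \<Sum>l<k. A i l * B l j)"

definition mtrans :: "rmat \<Rightarrow> rmat" where
  "mtrans A = (\<lambda>i j. A j i)"

definition mtrace :: "nat \<Rightarrow> rmat \<Rightarrow> real" where
  "mtrace p A = (\<Sum>i<p. A i i)"

definition etr :: "nat \<Rightarrow> rmat \<Rightarrow> real" where
  "etr p A = exp (mtrace p A)"

definition diagm :: "(nat \<Rightarrow> real) \<Rightarrow> rmat" where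
  "diagm d = (\<lambda>i j. if i = j then d i else 0)"

text \<open>Stiefel manifold V_{n,p}: n x p matrices X with X^T X = I_p
  (entries outside the n x p block are normalised to 0). V_{p,p} = O(p).\<close>
definition stiefel :: "nat \<Rightarrow> nat \<Rightarrow> rmat set" where
  "stiefel n p = {X. (\<forall>i j. (n \<le> i \<or> p \<le> j) \<longrightarrow> X i j = 0) \<and>
     (\<forall>i<p. \<forall>j<p. mmult n (mtrans X) X i j = (if i = j then 1 else 0))}"

definition spec_norm :: "nat \<Rightarrow> nat \<Rightarrow> rmat \<Rightarrow> real" where
  "spec_norm n p A = Sup {sqrt (\<Sum>i<n. (\<Sum>j<p. A i j * x j)\<^sup>2) | x. (\<Sum>j<p. (x j)\<^sup>2) = 1}"

text \<open>Normalised Haar (uniform) probability measure on V_{n,p}: a probability measure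
  on the Borel sets of V_{n,p} which is invariant under left multiplication by O(n).
  (Such a measure exists and is unique.)\<close>
definition is_stiefel_haar :: "nat \<Rightarrow> nat \<Rightarrow> rmat measure \<Rightarrow> bool" where
  "is_stiefel_haar n p \<mu> \<longleftrightarrow>
     sets \<mu> = sets (restrict_space borel (stiefel n p)) \<and>
     prob_space \<mu> \<and>
     (\<forall>Q \<in> stiefel n n. \<forall>A \<in> sets \<mu>.
        emeasure \<mu> ((\<lambda>X. mmult n Q X) -` A \<inter> space \<mu>) = emeasure \<mu> A)"

text \<open>0F1(n/2, D^2/4) = integral over V_{n,p} of exp(sum_j d_j X_jj) [dX],
  for D = diag(d_0,...,d_{p-1}).\<close>
definition hyp0F1 :: "nat \<Rightarrow> rmat measure \<Rightarrow> (nat \<Rightarrow> real) \<Rightarrow> real" where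
  "hyp0F1 p \<mu> d = (\<integral>X. exp (\<Sum>j<p. d j * X j j) \<partial>\<mu>)"

end

theory Submission
  imports Defs
begin

text \<open>
  The numerator is controlled by the spectral norm: tr(V D M^T Psi) = sum_j d_j m_j^T Psi v_j
  with unit columns m_j, v_j, hence it is at most ||Psi|| sum_j d_j. The denominator is bounded
  below by restricting the integral to the set U of X with all X_jj > 1 - eps0, which gives
  mu(U) exp((1 - eps0) sum_j d_j). As ||Psi|| = 1 - 2 eps0, the ratio is at most
  etr(-eps0 D) / mu(U), so K = mu(U)/2 works once mu(U) > 0.
  That follows from invariance: O(n) acts transitively on the Stiefel manifold (by Householder
  reflections), so the preimages of U under the maps X -> Q X, which all have measure mu(U),
  form a relatively open cover of it. By Lindelof countably many of them suffice, so mu(U) = 0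
  would make the whole space null.
\<close>

lemma stiefel_zero:
  assumes "X \<in> stiefel n p" "n \<le> i \<or> p \<le> j"
  shows "X i j = 0"
  using assms unfolding stiefel_def by auto

lemma stiefel_inner:
  assumes "X \<in> stiefel n p" "i < p" "j < p"
  shows "(\<Sum>l<n. X l i * X l j) = (if i = j then 1 else 0)"
  using assms unfolding stiefel_def mmult_def mtrans_def by auto

lemma stiefelI:
  assumes "\<And>i j. n \<le> i \<or> p \<le> j \<Longrightarrow> X i j = 0"
    and "\<And>i j. i < p \<Longrightarrow> j < p \<Longrightarrow> (\<Sum>l<n. X l i * X l j) = (if i = j then 1 else 0)"
  shows "X \<in> stiefel n p"
  using assms unfolding stiefel_def mmult_def mtrans_def by auto

lemma stiefel_column_norm:
  assumes "X \<in> stiefel n p" "j < p"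
  shows "(\<Sum>l<n. (X l j)\<^sup>2) = 1"
  using stiefel_inner[OF assms assms(2)] by (simp add: power2_eq_square)

lemma stiefel_entry_bound:
  assumes "X \<in> stiefel n p"
  shows "\<bar>X i j\<bar> \<le> 1"
proof (cases "i < n \<and> j < p")
  case True
  have "(X i j)\<^sup>2 \<le> (\<Sum>l<n. (X l j)\<^sup>2)"
    by (rule member_le_sum) (use True in auto)
  then show ?thesis
    using stiefel_column_norm[OF assms] True by (simp add: abs_square_le_1)
next
  case False
  then show ?thesis using stiefel_zero[OF assms, of i j] by auto
qed

lemma mmult_assoc: "mmult n (mmult n A B) C = mmult n A (mmult n B C)"
proof -
  have "(\<Sum>l<n. (\<Sum>m<n. A i m * B m l) * C l j) = (\<Sum>m<n. A i m * (\<Sum>l<n. B m l * C l j))" for i j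
  proof -
    have "(\<Sum>l<n. (\<Sum>m<n. A i m * B m l) * C l j) = (\<Sum>l<n. \<Sum>m<n. A i m * B m l * C l j)"
      by (simp add: sum_distrib_right)
    also have "\<dots> = (\<Sum>m<n. \<Sum>l<n. A i m * B m l * C l j)"
      by (rule sum.swap)
    also have "\<dots> = (\<Sum>m<n. A i m * (\<Sum>l<n. B m l * C l j))"
      by (simp add: sum_distrib_left mult_ac)
    finally show ?thesis .
  qed
  then show ?thesis unfolding mmult_def by (simp add: fun_eq_iff)
qed

lemma stiefel_mmult:
  assumes Q: "Q \<in> stiefel n n" and X: "X \<in> stiefel n p"
  shows "mmult n Q X \<in> stiefel n p"
proof (rule stiefelI)
  show "mmult n Q X i j = 0" if "n \<le> i \<or> p \<le> j" for i j
    using that stiefel_zero[OF Q] stiefel_zero[OF X] unfolding mmult_def by auto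
  fix a b assume ab: "a < p" "b < p"
  have "(\<Sum>i<n. mmult n Q X i a * mmult n Q X i b)
      = (\<Sum>i<n. \<Sum>l<n. \<Sum>m<n. Q i l * X l a * (Q i m * X m b))"
    unfolding mmult_def by (simp add: sum_product)
  also have "\<dots> = (\<Sum>l<n. \<Sum>i<n. \<Sum>m<n. Q i l * X l a * (Q i m * X m b))"
    by (rule sum.swap)
  also have "\<dots> = (\<Sum>l<n. \<Sum>m<n. \<Sum>i<n. Q i l * X l a * (Q i m * X m b))"
    by (rule sum.cong[OF refl], rule sum.swap)
  also have "\<dots> = (\<Sum>l<n. \<Sum>m<n. X l a * X m b * (\<Sum>i<n. Q i l * Q i m))"
    by (simp add: sum_distrib_left mult_ac)
  also have "\<dots> = (\<Sum>l<n. \<Sum>m<n. X l a * X m b * (if l = m then 1 else 0))"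
    by (intro sum.cong refl) (simp add: stiefel_inner[OF Q])
  also have "\<dots> = (\<Sum>l<n. X l a * X l b)"
    by (simp add: if_distrib cong: if_cong)
  finally show "(\<Sum>i<n. mmult n Q X i a * mmult n Q X i b) = (if a = b then 1 else 0)"
    using stiefel_inner[OF X ab] by simp
qed

definition idm :: "nat \<Rightarrow> rmat" where
  "idm n = (\<lambda>i j. if i = j \<and> i < n then 1 else 0)"

lemma sum_idm_left:
  assumes "i < n" shows "(\<Sum>k<n. idm n i k * f k) = f i"
proof -
  have "(\<Sum>k<n. idm n i k * f k) = (\<Sum>k<n. if i = k then f k else 0)"
    by (rule sum.cong) (auto simp: idm_def)
  then show ?thesis using assms by simp
qed

lemma sum_idm_right:
  assumes "i < n" shows "(\<Sum>k<n. f k * idm n k i) = f i"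
proof -
  have "(\<Sum>k<n. f k * idm n k i) = (\<Sum>k<n. if i = k then f k else 0)"
    by (rule sum.cong) (auto simp: idm_def)
  then show ?thesis using assms by simp
qed

lemma idm_stiefel: "idm n \<in> stiefel n n"
proof (rule stiefelI)
  fix i j assume "i < n" "j < n"
  then have "(\<Sum>l<n. idm n l i * idm n l j) = idm n i j"
    using sum_idm_right[of i n "\<lambda>l. idm n l j"] by (simp add: mult.commute)
  then show "(\<Sum>l<n. idm n l i * idm n l j) = (if i = j then 1 else 0)"
    using \<open>i < n\<close> by (simp add: idm_def)
qed (auto simp: idm_def)

definition house :: "nat \<Rightarrow> (nat \<Rightarrow> real) \<Rightarrow> rmat" where
  "house n v = (\<lambda>i k. idm n i k - 2 * v i * v k / (\<Sum>l<n. (v l)\<^sup>2))"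

lemma house_stiefel:
  assumes v_zero: "\<And>k. n \<le> k \<Longrightarrow> v k = 0" and v_pos: "(\<Sum>l<n. (v l)\<^sup>2) > 0"
  shows "house n v \<in> stiefel n n"
proof (rule stiefelI)
  define vv where "vv = (\<Sum>l<n. (v l)\<^sup>2)"
  have H: "house n v = (\<lambda>i k. idm n i k - 2 * v i * v k / vv)"
    unfolding house_def vv_def ..
  show "house n v i j = 0" if "n \<le> i \<or> n \<le> j" for i j
    using that v_zero unfolding H idm_def by auto
  fix i j assume ij: "i < n" "j < n"
  have "(\<Sum>l<n. house n v l i * house n v l j)
    = (\<Sum>l<n. idm n l i * idm n l j) - (\<Sum>l<n. idm n l i * (2 * v l * v j / vv))
      - (\<Sum>l<n. (2 * v l * v i / vv) * idm n l j) + (\<Sum>l<n. (2 * v l * v i / vv) * (2 * v l * v j / vv))"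
    unfolding H by (simp add: algebra_simps sum_subtractf sum.distrib)
  also have "(\<Sum>l<n. idm n l i * idm n l j) = idm n i j"
    using sum_idm_right[OF ij(1), of "\<lambda>l. idm n l j"] by (simp add: mult.commute)
  also have "(\<Sum>l<n. idm n l i * (2 * v l * v j / vv)) = 2 * v i * v j / vv"
    using sum_idm_right[OF ij(1), of "\<lambda>l. 2 * v l * v j / vv"] by (simp add: mult_ac)
  also have "(\<Sum>l<n. (2 * v l * v i / vv) * idm n l j) = 2 * v i * v j / vv"
    using sum_idm_right[OF ij(2), of "\<lambda>l. 2 * v l * v i / vv"] by (simp add: mult_ac)
  also have "(\<Sum>l<n. (2 * v l * v i / vv) * (2 * v l * v j / vv)) = 4 * v i * v j * vv / (vv * vv)"
    unfolding vv_def by (simp add: sum_distrib_left sum_divide_distrib power2_eq_square mult_ac)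
  also have "4 * v i * v j * vv / (vv * vv) = 4 * v i * v j / vv"
    using v_pos unfolding vv_def[symmetric] by (simp add: field_simps)
  finally show "(\<Sum>l<n. house n v l i * house n v l j) = (if i = j then 1 else 0)"
    using ij by (simp add: idm_def)
qed

lemma mmult_house:
  assumes "i < n"
  shows "mmult n (house n v) Y i j = Y i j - 2 * v i * (\<Sum>k<n. v k * Y k j) / (\<Sum>k<n. (v k)\<^sup>2)"
proof -
  have "mmult n (house n v) Y i j
      = (\<Sum>k<n. idm n i k * Y k j) - (\<Sum>k<n. 2 * v i * v k / (\<Sum>l<n. (v l)\<^sup>2) * Y k j)"
    unfolding mmult_def house_def by (simp add: algebra_simps sum_subtractf)
  also have "(\<Sum>k<n. idm n i k * Y k j) = Y i j" by (rule sum_idm_left[OF assms])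
  finally show ?thesis
    by (simp add: sum_distrib_left sum_divide_distrib mult_ac)
qed

text \<open>The reflection in the hyperplane orthogonal to x - y swaps the unit vectors x and y.\<close>

lemma householder_reflects_unit:
  fixes x y :: "nat \<Rightarrow> real"
  assumes x: "(\<Sum>l<n. (x l)\<^sup>2) = 1" and y: "(\<Sum>l<n. (y l)\<^sup>2) = 1"
    and ne: "(\<Sum>l<n. (x l - y l)\<^sup>2) \<noteq> 0"
  shows "x i - 2 * (x i - y i) * (\<Sum>l<n. (x l - y l) * x l) / (\<Sum>l<n. (x l - y l)\<^sup>2) = y i"
proof -
  define s where "s = (\<Sum>l<n. x l * y l)"
  have vv: "(\<Sum>l<n. (x l - y l)\<^sup>2) = 2 - 2 * s"
    using x y unfolding s_def
    by (simp add: power2_diff sum_subtractf sum.distrib sum_distrib_left mult_ac)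
  have "(\<Sum>l<n. (x l - y l) * x l) = (\<Sum>l<n. (x l)\<^sup>2) - s"
    unfolding s_def by (simp add: algebra_simps sum_subtractf power2_eq_square)
  then have vx: "(\<Sum>l<n. (x l - y l) * x l) = 1 - s"
    using x by simp
  show ?thesis
    using ne unfolding vv vx by (simp add: field_simps)
qed

lemma mmult_idm_left: "i < n \<Longrightarrow> mmult n (idm n) Y i j = Y i j"
  unfolding mmult_def by (rule sum_idm_left)

lemma stiefel_column_orthogonal_to_unit_columns:
  assumes Y: "Y \<in> stiefel n p" and q: "q < p" and j: "j < q" and jn: "j < n"
    and prefix: "\<And>i. i < n \<Longrightarrow> Y i j = idm n i j"
  shows "Y j q = 0"
proof -
  have "Y j q = (\<Sum>l<n. Y l q * idm n l j)"
    using sum_idm_right[OF jn, of "\<lambda>l. Y l q"] by simp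
  also have "\<dots> = (\<Sum>l<n. Y l j * Y l q)"
    by (rule sum.cong) (simp_all add: prefix mult.commute)
  also have "\<dots> = 0"
    using stiefel_inner[OF Y, of j q] j q by simp
  finally show ?thesis .
qed

lemma stiefel_reflect_next_column:
  assumes Y: "Y \<in> stiefel n p" and q: "q < p" and pn: "p \<le> n"
    and prefix: "\<And>i j. i < n \<Longrightarrow> j < q \<Longrightarrow> Y i j = idm n i j"
  shows "\<exists>H\<in>stiefel n n. \<forall>i<n. \<forall>j<Suc q. mmult n H Y i j = idm n i j"
proof (cases "\<forall>i<n. Y i q = idm n i q")
  case True
  then show ?thesis
    using idm_stiefel prefix by (metis less_Suc_eq mmult_idm_left)
next
  case False
  have qn: "q < n" using q pn by simp
  define x where "x l = Y l q" for l
  define y where "y l = idm n l q" for l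
  define v where "v l = x l - y l" for l
  have x_unit: "(\<Sum>l<n. (x l)\<^sup>2) = 1"
    unfolding x_def by (rule stiefel_column_norm[OF Y q])
  have y_unit: "(\<Sum>l<n. (y l)\<^sup>2) = 1"
    using sum_idm_right[OF qn, of "\<lambda>l. idm n l q"] qn
    unfolding y_def by (simp add: power2_eq_square idm_def)
  obtain k0 where k0: "k0 < n" "v k0 \<noteq> 0"
    using False unfolding v_def x_def y_def by auto
  have vv_pos: "(\<Sum>l<n. (v l)\<^sup>2) > 0"
  proof -
    have "(v k0)\<^sup>2 \<le> (\<Sum>l<n. (v l)\<^sup>2)" by (rule member_le_sum) (use k0 in auto)
    moreover have "(v k0)\<^sup>2 > 0" using k0 by simp
    ultimately show ?thesis by linarith
  qed
  have H: "house n v \<in> stiefel n n"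
    by (rule house_stiefel[OF _ vv_pos]) (simp add: v_def x_def y_def stiefel_zero[OF Y] idm_def)
  have fixed: "mmult n (house n v) Y i j = idm n i j" if i: "i < n" and j: "j < q" for i j
  proof -
    have jn: "j < n" using j qn by simp
    have "v j = 0"
      using stiefel_column_orthogonal_to_unit_columns[OF Y q j jn] prefix j jn
      unfolding v_def x_def y_def by (simp add: idm_def)
    moreover have "(\<Sum>k<n. v k * Y k j) = v j"
      using sum_idm_right[OF jn, of v] by (simp add: prefix j)
    ultimately show ?thesis
      by (simp add: mmult_house[OF i] prefix[OF i j])
  qed
  have reflected: "mmult n (house n v) Y i q = idm n i q" if i: "i < n" for i
    using householder_reflects_unit[OF x_unit y_unit, of i] vv_pos
    unfolding mmult_house[OF i] v_def by (simp add: x_def y_def)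
  show ?thesis
    using H fixed reflected less_Suc_eq by metis
qed

lemma stiefel_transitive:
  assumes X: "X \<in> stiefel n p" and pn: "p \<le> n"
  shows "\<exists>Q\<in>stiefel n n. \<forall>i<n. \<forall>j<p. mmult n Q X i j = idm n i j"
proof -
  have "\<exists>Q\<in>stiefel n n. \<forall>i<n. \<forall>j<q. mmult n Q X i j = idm n i j" if "q \<le> p" for q
    using that
  proof (induction q)
    case 0
    show ?case using idm_stiefel by blast
  next
    case (Suc q)
    then obtain Q where Q: "Q \<in> stiefel n n" and QX: "\<forall>i<n. \<forall>j<q. mmult n Q X i j = idm n i j"
      by auto
    have "q < p" using Suc.prems by simp
    then obtain H where H: "H \<in> stiefel n n"
      and HQX: "\<forall>i<n. \<forall>j<Suc q. mmult n H (mmult n Q X) i j = idm n i j"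
      using stiefel_reflect_next_column[OF stiefel_mmult[OF Q X] _ pn] QX by blast
    show ?case
      using stiefel_mmult[OF H Q] HQX by (metis mmult_assoc)
  qed
  then show ?thesis by blast
qed

lemma spec_norm_upper:
  assumes "(\<Sum>j<p. (x j)\<^sup>2) = 1"
  shows "sqrt (\<Sum>i<n. (\<Sum>j<p. A i j * x j)\<^sup>2) \<le> spec_norm n p A"
  unfolding spec_norm_def
proof (rule cSup_upper)
  show "sqrt (\<Sum>i<n. (\<Sum>j<p. A i j * x j)\<^sup>2) \<in> {sqrt (\<Sum>i<n. (\<Sum>j<p. A i j * x j)\<^sup>2) |x. (\<Sum>j<p. (x j)\<^sup>2) = 1}"
    using assms by blast
  show "bdd_above {sqrt (\<Sum>i<n. (\<Sum>j<p. A i j * x j)\<^sup>2) |x. (\<Sum>j<p. (x j)\<^sup>2) = 1}"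
  proof (rule bdd_aboveI, safe)
    fix y :: "nat \<Rightarrow> real" assume y: "(\<Sum>j<p. (y j)\<^sup>2) = 1"
    have "(\<Sum>i<n. (\<Sum>j<p. A i j * y j)\<^sup>2) \<le> (\<Sum>i<n. (\<Sum>j<p. (A i j)\<^sup>2))"
      by (rule sum_mono) (use Cauchy_Schwarz_ineq_sum[of "A _" y "{..<p}"] y in simp)
    then show "sqrt (\<Sum>i<n. (\<Sum>j<p. A i j * y j)\<^sup>2) \<le> sqrt (\<Sum>i<n. (\<Sum>j<p. (A i j)\<^sup>2))"
      by simp
  qed
qed

lemma bilinear_form_le_spec_norm:
  assumes u: "(\<Sum>m<n. (u m)\<^sup>2) = 1" and w: "(\<Sum>i<p. (w i)\<^sup>2) = 1"
  shows "(\<Sum>m<n. u m * (\<Sum>i<p. A m i * w i)) \<le> spec_norm n p A"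
proof -
  let ?Aw = "\<lambda>m. \<Sum>i<p. A m i * w i"
  have "(\<Sum>m<n. u m * ?Aw m)\<^sup>2 \<le> (\<Sum>m<n. (u m)\<^sup>2) * (\<Sum>m<n. (?Aw m)\<^sup>2)"
    by (rule Cauchy_Schwarz_ineq_sum)
  then have "(\<Sum>m<n. u m * ?Aw m) \<le> sqrt (\<Sum>m<n. (?Aw m)\<^sup>2)"
    using u by (simp add: real_le_rsqrt)
  also have "\<dots> \<le> spec_norm n p A"
    by (rule spec_norm_upper[OF w])
  finally show ?thesis .
qed

lemma mtrace_mmult_diagm:
  "mtrace p (mmult n (mmult p (mmult p V (diagm d)) (mtrans M)) \<Psi>)
    = (\<Sum>l<p. d l * (\<Sum>m<n. M m l * (\<Sum>i<p. \<Psi> m i * V i l)))"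
proof -
  have VD: "mmult p V (diagm d) = (\<lambda>i l. if l < p then V i l * d l else 0)"
    by (auto simp: mmult_def diagm_def fun_eq_iff if_distrib cong: if_cong)
  have "mtrace p (mmult n (mmult p (mmult p V (diagm d)) (mtrans M)) \<Psi>)
     = (\<Sum>i<p. \<Sum>m<n. \<Sum>l<p. V i l * d l * M m l * \<Psi> m i)"
    unfolding VD unfolding mtrace_def mmult_def mtrans_def by (simp add: sum_distrib_right)
  also have "\<dots> = (\<Sum>i<p. \<Sum>l<p. \<Sum>m<n. V i l * d l * M m l * \<Psi> m i)"
    by (rule sum.cong[OF refl], rule sum.swap)
  also have "\<dots> = (\<Sum>l<p. \<Sum>i<p. \<Sum>m<n. V i l * d l * M m l * \<Psi> m i)"
    by (rule sum.swap)
  also have "\<dots> = (\<Sum>l<p. \<Sum>m<n. \<Sum>i<p. V i l * d l * M m l * \<Psi> m i)"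
    by (rule sum.cong[OF refl], rule sum.swap)
  also have "\<dots> = (\<Sum>l<p. d l * (\<Sum>m<n. M m l * (\<Sum>i<p. \<Psi> m i * V i l)))"
    by (simp add: sum_distrib_left mult_ac)
  finally show ?thesis .
qed

lemma etr_le_exp_spec_norm:
  assumes d: "\<And>j. j < p \<Longrightarrow> 0 \<le> d j" and M: "M \<in> stiefel n p" and V: "V \<in> stiefel p p"
  shows "etr p (mmult n (mmult p (mmult p V (diagm d)) (mtrans M)) \<Psi>)
    \<le> exp (spec_norm n p \<Psi> * (\<Sum>j<p. d j))"
proof -
  have "(\<Sum>l<p. d l * (\<Sum>m<n. M m l * (\<Sum>i<p. \<Psi> m i * V i l))) \<le> (\<Sum>l<p. d l * spec_norm n p \<Psi>)"
  proof (rule sum_mono)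
    fix l assume "l \<in> {..<p}"
    then show "d l * (\<Sum>m<n. M m l * (\<Sum>i<p. \<Psi> m i * V i l)) \<le> d l * spec_norm n p \<Psi>"
      using d bilinear_form_le_spec_norm[OF stiefel_column_norm[OF M] stiefel_column_norm[OF V]]
      by (intro mult_left_mono) auto
  qed
  also have "\<dots> = spec_norm n p \<Psi> * (\<Sum>j<p. d j)"
    by (simp add: sum_distrib_right[symmetric] mult.commute)
  finally show ?thesis
    unfolding etr_def mtrace_mmult_diagm by simp
qed

lemma measure_pos_if_open_translates_cover:
  fixes M :: "'a::second_countable_topology measure" and W :: "'g \<Rightarrow> 'a set"
  assumes M: "prob_space M" and U: "U \<in> sets M"
    and W_open: "\<And>g. g \<in> G \<Longrightarrow> open (W g)"
    and W_sets: "\<And>g. g \<in> G \<Longrightarrow> W g \<inter> space M \<in> sets M"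
    and W_measure: "\<And>g. g \<in> G \<Longrightarrow> emeasure M (W g \<inter> space M) = emeasure M U"
    and cover: "space M \<subseteq> (\<Union>g\<in>G. W g)"
  shows "measure M U > 0"
proof (rule ccontr)
  assume "\<not> measure M U > 0"
  then have "measure M U = 0"
    using measure_nonneg[of M U] by linarith
  then have U_null: "emeasure M U = 0"
    by (simp add: finite_measure.emeasure_eq_measure[OF prob_space.finite_measure[OF M]])
  have "\<And>S. S \<in> W ` G \<Longrightarrow> open S"
    using W_open by blast
  then obtain \<F> where \<F>: "\<F> \<subseteq> W ` G" "countable \<F>" "\<Union>\<F> = \<Union>(W ` G)"
    by (rule Lindelof)
  obtain G' where G': "G' \<subseteq> G" "countable G'" "\<F> = W ` G'"
    using iffD1[OF countable_subset_image, OF conjI[OF \<F>(2,1)]] by blast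
  have "(\<Union>g\<in>G'. W g \<inter> space M) \<in> null_sets M"
  proof (rule null_sets_UN')
    fix g assume "g \<in> G'"
    with G'(1) have g: "g \<in> G" by blast
    show "W g \<inter> space M \<in> null_sets M"
      using W_sets[OF g] W_measure[OF g] U_null by (intro null_setsI) simp_all
  qed (fact G'(2))
  moreover have "space M = (\<Union>g\<in>G'. W g \<inter> space M)"
    using cover unfolding \<F>(3)[symmetric] G'(3) by blast
  ultimately have "emeasure M (space M) = 0"
    by (metis null_setsD1)
  then show False
    using prob_space.emeasure_space_1[OF M] by simp
qed

lemma stiefel_haar_space:
  assumes "is_stiefel_haar n p \<mu>"
  shows "space \<mu> = stiefel n p"
proof -
  have "sets \<mu> = sets (restrict_space borel (stiefel n p))"
    using assms unfolding is_stiefel_haar_def by simp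
  from sets_eq_imp_space_eq[OF this] show ?thesis
    by (simp add: space_restrict_space)
qed

lemma stiefel_haar_sets:
  assumes "is_stiefel_haar n p \<mu>" "B \<in> sets borel"
  shows "stiefel n p \<inter> B \<in> sets \<mu>"
proof -
  have "sets \<mu> = (\<inter>) (stiefel n p) ` sets borel"
    using assms(1) unfolding is_stiefel_haar_def sets_restrict_space by simp
  then show ?thesis
    using assms(2) by simp
qed

lemma stiefel_haar_borel_measurable:
  assumes "is_stiefel_haar n p \<mu>" "continuous_on UNIV f"
  shows "f \<in> borel_measurable \<mu>"
proof -
  have "sets \<mu> = sets (restrict_space borel (stiefel n p))"
    using assms(1) unfolding is_stiefel_haar_def by simp
  then have eq: "borel_measurable \<mu> = borel_measurable (restrict_space borel (stiefel n p))"
    by (rule measurable_cong_sets) simp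
  show ?thesis
    unfolding eq by (rule measurable_restrict_space1[OF borel_measurable_continuous_onI[OF assms(2)]])
qed

lemma continuous_on_rmat_entry: "continuous_on UNIV (\<lambda>X::rmat. X i j)"
  by (rule continuous_on_product_then_coordinatewise[OF continuous_on_product_coordinates])

lemma continuous_on_mmult_entry: "continuous_on UNIV (\<lambda>X::rmat. mmult n Q X i j)"
  unfolding mmult_def by (intro continuous_on_sum continuous_on_mult_left continuous_on_rmat_entry)

lemma open_all_greater:
  fixes f :: "nat \<Rightarrow> 'a::topological_space \<Rightarrow> 'b::linorder_topology"
  assumes "\<And>j. continuous_on UNIV (f j)"
  shows "open {x. \<forall>j<p. c < f j x}"
proof -
  have "{x. \<forall>j<p. c < f j x} = (\<Inter>j\<in>{..<p}. {x. c < f j x})" by auto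
  also have "open \<dots>"
    by (intro open_INT finite_lessThan ballI open_Collect_less[OF continuous_on_const assms])
  finally show ?thesis .
qed

lemma stiefel_haar_sets_diag_gt:
  assumes "is_stiefel_haar n p \<mu>"
  shows "{X \<in> stiefel n p. \<forall>j<p. c < X j j} \<in> sets \<mu>"
proof -
  have "open {X::rmat. \<forall>j<p. c < X j j}"
    by (rule open_all_greater) (rule continuous_on_rmat_entry)
  moreover have "{X \<in> stiefel n p. \<forall>j<p. c < X j j} = stiefel n p \<inter> {X. \<forall>j<p. c < X j j}"
    by blast
  ultimately show ?thesis
    using stiefel_haar_sets[OF assms borel_open] by simp
qed

lemma stiefel_haar_diag_gt_measure_pos:
  assumes haar: "is_stiefel_haar n p \<mu>" and pn: "p \<le> n" and c: "c < 1"
  shows "measure \<mu> {X \<in> stiefel n p. \<forall>j<p. c < X j j} > 0"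
proof -
  let ?S = "stiefel n p" and ?U = "{X \<in> stiefel n p. \<forall>j<p. c < X j j}"
  define W where "W Q = {X. \<forall>j<p. c < mmult n Q X j j}" for Q
  have space: "space \<mu> = ?S" by (rule stiefel_haar_space[OF haar])
  have open_W: "open (W Q)" for Q
    unfolding W_def by (intro open_all_greater continuous_on_mmult_entry)
  have W_sets: "W Q \<inter> space \<mu> \<in> sets \<mu>" for Q
    using stiefel_haar_sets[OF haar borel_open[OF open_W]] unfolding space by (simp add: Int_commute)
  have U: "?U \<in> sets \<mu>" by (rule stiefel_haar_sets_diag_gt[OF haar])
  have inv: "emeasure \<mu> ((\<lambda>X. mmult n Q X) -` A \<inter> space \<mu>) = emeasure \<mu> A"
    if "Q \<in> stiefel n n" "A \<in> sets \<mu>" for Q A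
    using haar that unfolding is_stiefel_haar_def by blast
  have preimage: "(\<lambda>X. mmult n Q X) -` ?U \<inter> space \<mu> = W Q \<inter> space \<mu>" if "Q \<in> stiefel n n" for Q
    unfolding space W_def using stiefel_mmult[OF that] by auto
  have W_measure: "emeasure \<mu> (W Q \<inter> space \<mu>) = emeasure \<mu> ?U" if "Q \<in> stiefel n n" for Q
    using inv[OF that U] preimage[OF that] by simp
  have cover: "space \<mu> \<subseteq> (\<Union>Q\<in>stiefel n n. W Q)"
  proof
    fix X assume "X \<in> space \<mu>"
    then obtain Q where "Q \<in> stiefel n n" "\<forall>i<n. \<forall>j<p. mmult n Q X i j = idm n i j"
      using stiefel_transitive[OF _ pn] space by blast
    then have "X \<in> W Q"
      using pn c unfolding W_def by (auto simp: idm_def)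
    with \<open>Q \<in> stiefel n n\<close> show "X \<in> (\<Union>Q\<in>stiefel n n. W Q)" by blast
  qed
  have "prob_space \<mu>" using haar unfolding is_stiefel_haar_def by simp
  from measure_pos_if_open_translates_cover[OF this U open_W W_sets W_measure cover]
  show ?thesis .
qed

lemma stiefel_haar_integrable_exp_diag:
  assumes haar: "is_stiefel_haar n p \<mu>"
  shows "integrable \<mu> (\<lambda>X. exp (\<Sum>j<p. d j * X j j))"
proof -
  interpret prob_space \<mu> using haar unfolding is_stiefel_haar_def by simp
  have bound: "norm (exp (\<Sum>j<p. d j * X j j)) \<le> exp (\<Sum>j<p. \<bar>d j\<bar>)" if "X \<in> space \<mu>" for X
  proof -
    have X: "X \<in> stiefel n p" using that stiefel_haar_space[OF haar] by simp
    have "d j * X j j \<le> \<bar>d j\<bar>" for j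
    proof -
      have "d j * X j j \<le> \<bar>d j\<bar> * \<bar>X j j\<bar>" by (simp flip: abs_mult)
      also have "\<dots> \<le> \<bar>d j\<bar>" using stiefel_entry_bound[OF X] by (simp add: mult_left_le)
      finally show ?thesis .
    qed
    then show ?thesis by (simp add: sum_mono)
  qed
  have "continuous_on UNIV (\<lambda>X::rmat. exp (\<Sum>j<p. d j * X j j))"
    by (intro continuous_on_exp continuous_on_sum continuous_on_mult_left continuous_on_rmat_entry)
  then show ?thesis
    using bound stiefel_haar_borel_measurable[OF haar]
    by (intro integrable_const_bound[where B="exp (\<Sum>j<p. \<bar>d j\<bar>)"]) auto
qed

lemma hyp0F1_ge_measure_diag_gt:
  assumes haar: "is_stiefel_haar n p \<mu>" and d: "\<And>j. j < p \<Longrightarrow> 0 \<le> d j"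
  shows "measure \<mu> {X \<in> stiefel n p. \<forall>j<p. c < X j j} * exp (c * (\<Sum>j<p. d j)) \<le> hyp0F1 p \<mu> d"
proof -
  let ?U = "{X \<in> stiefel n p. \<forall>j<p. c < X j j}"
  define f where "f X = exp (\<Sum>j<p. d j * X j j)" for X :: rmat
  define K where "K = exp (c * (\<Sum>j<p. d j))"
  interpret prob_space \<mu> using haar unfolding is_stiefel_haar_def by simp
  have U: "?U \<in> sets \<mu>" by (rule stiefel_haar_sets_diag_gt[OF haar])
  have le_f: "K * indicator ?U X \<le> f X" for X
  proof (cases "X \<in> ?U")
    case True
    have "c * (\<Sum>j<p. d j) = (\<Sum>j<p. d j * c)"
      unfolding sum_distrib_left by (rule sum.cong) simp_all
    also have "\<dots> \<le> (\<Sum>j<p. d j * X j j)"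
      using True d by (intro sum_mono mult_left_mono) auto
    finally have "K \<le> f X"
      unfolding K_def f_def by (rule exp_mono)
    then show ?thesis
      unfolding indicator_simps(1)[OF True] by simp
  next
    case False
    show ?thesis
      unfolding indicator_simps(2)[OF False] f_def by simp
  qed
  have "emeasure \<mu> ?U < \<infinity>"
    by (simp add: less_top[symmetric])
  then have K_int: "integrable \<mu> (\<lambda>X. K * indicator ?U X)"
    by (intro integrable_mult_right integrable_real_indicator U)
  have "?U \<inter> space \<mu> = ?U"
    using sets.sets_into_space[OF U] by blast
  then have "K * measure \<mu> ?U = (\<integral>X. K * indicator ?U X \<partial>\<mu>)"
    by (simp only: integral_mult_right_zero Bochner_Integration.integral_indicator)
  also have "\<dots> \<le> (\<integral>X. f X \<partial>\<mu>)"
    using stiefel_haar_integrable_exp_diag[OF haar] unfolding f_def[abs_def]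
    by (intro integral_mono[OF K_int _ le_f[unfolded f_def]])
  finally show ?thesis
    unfolding hyp0F1_def f_def K_def by (simp only: mult.commute)
qed

lemma etr_smult_diagm: "etr p (\<lambda>i j. a * diagm d i j) = exp (a * (\<Sum>j<p. d j))"
  unfolding etr_def mtrace_def diagm_def by (simp add: sum_distrib_left)

lemma etr_div_hyp0F1_le:
  assumes haar: "is_stiefel_haar n p \<mu>"
    and pos: "0 < measure \<mu> {X \<in> stiefel n p. \<forall>j<p. c < X j j}"
    and d: "\<And>j. j < p \<Longrightarrow> 0 \<le> d j" and M: "M \<in> stiefel n p" and V: "V \<in> stiefel p p"
  shows "etr p (mmult n (mmult p (mmult p V (diagm d)) (mtrans M)) \<Psi>) / hyp0F1 p \<mu> d
    \<le> exp ((spec_norm n p \<Psi> - c) * (\<Sum>j<p. d j)) / measure \<mu> {X \<in> stiefel n p. \<forall>j<p. c < X j j}"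
proof -
  let ?m = "measure \<mu> {X \<in> stiefel n p. \<forall>j<p. c < X j j}" and ?D = "\<Sum>j<p. d j"
  have "etr p (mmult n (mmult p (mmult p V (diagm d)) (mtrans M)) \<Psi>) / hyp0F1 p \<mu> d
      \<le> exp (spec_norm n p \<Psi> * ?D) / (?m * exp (c * ?D))"
    using etr_le_exp_spec_norm[OF d M V, where \<Psi>=\<Psi>] hyp0F1_ge_measure_diag_gt[OF haar d, where c=c] pos
    by (intro frac_le) (auto simp: etr_def)
  also have "\<dots> = exp ((spec_norm n p \<Psi> - c) * ?D) / ?m"
    by (simp add: left_diff_distrib exp_diff)
  finally show ?thesis .
qed

theorem lemma6:
  fixes n p :: nat and \<mu> :: "rmat measure" and eps0 :: real
  assumes "1 \<le> p" and "p \<le> n"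
    and "is_stiefel_haar n p \<mu>"
  shows "\<exists>K > 0. \<forall>\<Psi> d M V.
           spec_norm n p \<Psi> < 1 \<longrightarrow>
           eps0 = (1 - spec_norm n p \<Psi>) / 2 \<longrightarrow>
           (\<forall>j<p. 0 < d j) \<longrightarrow>
           M \<in> stiefel n p \<longrightarrow>
           V \<in> stiefel p p \<longrightarrow>
           etr p (mmult n (mmult p (mmult p V (diagm d)) (mtrans M)) \<Psi>) / hyp0F1 p \<mu> d
             < etr p (\<lambda>i j. - eps0 * diagm d i j) / K"
proof (cases "eps0 > 0")
  case False
  \<comment> \<open>then no \<Psi> satisfies the hypotheses, so any K works\<close>
  then show ?thesis by (intro exI[of _ 1]) auto
next
  case True
  define m where "m = measure \<mu> {X \<in> stiefel n p. \<forall>j<p. 1 - eps0 < X j j}"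
  have m: "m > 0"
    unfolding m_def using stiefel_haar_diag_gt_measure_pos[OF assms(3,2)] True by simp
  show ?thesis
  proof (intro exI[of _ "m / 2"] conjI allI impI)
    fix \<Psi> :: rmat and d :: "nat \<Rightarrow> real" and M V :: rmat
    assume "spec_norm n p \<Psi> < 1" and eps0: "eps0 = (1 - spec_norm n p \<Psi>) / 2"
      and d: "\<forall>j<p. 0 < d j" and M: "M \<in> stiefel n p" and V: "V \<in> stiefel p p"
    have "\<And>j. j < p \<Longrightarrow> 0 \<le> d j"
      using d by (simp add: less_imp_le)
    then have "etr p (mmult n (mmult p (mmult p V (diagm d)) (mtrans M)) \<Psi>) / hyp0F1 p \<mu> d
        \<le> exp ((spec_norm n p \<Psi> - (1 - eps0)) * (\<Sum>j<p. d j)) / m"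
      unfolding m_def by (rule etr_div_hyp0F1_le[OF assms(3) m[unfolded m_def] _ M V])
    also have "\<dots> = etr p (\<lambda>i j. - eps0 * diagm d i j) / m"
    proof -
      have "spec_norm n p \<Psi> - (1 - eps0) = - eps0"
        using eps0 by simp
      then show ?thesis by (simp only: etr_smult_diagm)
    qed
    also have "\<dots> < etr p (\<lambda>i j. - eps0 * diagm d i j) / (m / 2)"
      using m by (simp add: etr_def field_simps)
    finally show "etr p (mmult n (mmult p (mmult p V (diagm d)) (mtrans M)) \<Psi>) / hyp0F1 p \<mu> d
        < etr p (\<lambda>i j. - eps0 * diagm d i j) / (m / 2)" .
  qed (use m in simp)
qed

end
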